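(* Let $A$ be a torsion-free Abelian group with endomorphism ring $E=\mathrm{End}\,A$. Then $E$ is centrally essential if and only if the quasi-endomorphism ring $\mathbb{Q}E=\mathbb{Q}\otimes E$ is centrally essential.
   Context: All rings are associative with non-zero identity. A ring $R$ is centrally essential if for every non-zero $a\in R$ there exist non-zero elements $x,y$ of the center of $R$ with $ax=y$. The quasi-endomorphism ring $\mathbb{Q}E=\mathbb{Q}\otimes\mathrm{End}\,A$ is identified with $\{\alpha\in\mathrm{End}_{\mathbb{Q}}(\mathbb{Q}\otimes A)\mid n\alpha\in\mathrm{End}\,A\text{ for some positive integer } n\}$. *)

theory Defs
  imports Main
begin

primrec nsm :: "nat \<Rightarrow> 'a::ab_group_add \<Rightarrow> 'a" where
  "nsm 0 x = 0"
| "nsm (Suc n) x = x + nsm n x"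

definition torsion_free :: "'a::ab_group_add itself \<Rightarrow> bool" where
  "torsion_free _ \<longleftrightarrow> (\<forall>n::nat. \<forall>x::'a. n > 0 \<longrightarrow> nsm n x = 0 \<longrightarrow> x = 0)"

definition End :: "('a::ab_group_add \<Rightarrow> 'a) set" where
  "End = {f. \<forall>x y. f (x + y) = f x + f y}"

definition center_End :: "('a::ab_group_add \<Rightarrow> 'a) set" where
  "center_End = {c \<in> End. \<forall>f \<in> End. c \<circ> f = f \<circ> c}"

definition centrally_essential_End :: "'a::ab_group_add itself \<Rightarrow> bool" where
  "centrally_essential_End _ \<longleftrightarrow>
     (\<forall>a \<in> (End :: ('a \<Rightarrow> 'a) set). a \<noteq> (\<lambda>_. 0) \<longrightarrow>
        (\<exists>x \<in> center_End. \<exists>y \<in> center_End.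
           x \<noteq> (\<lambda>_. 0) \<and> y \<noteq> (\<lambda>_. 0) \<and> a \<circ> x = y))"

text \<open>The quasi-endomorphism ring QE = Q \<otimes> End A, realised in the standard way as
  formal fractions (f, n) standing for (1/n) \<otimes> f, with f \<in> End A, n > 0, where
  (1/n) \<otimes> f = (1/m) \<otimes> g iff k(m f - n g) = 0 for some k > 0.
  Ring operations: (f,n)+(g,m) = (m f + n g, n m), (f,n)(g,m) = (f \<circ> g, n m).\<close>
type_synonym 'a qe = "('a \<Rightarrow> 'a) \<times> nat"

definition QE :: "('a::ab_group_add) qe set" where
  "QE = {p. fst p \<in> End \<and> snd p > 0}"

definition qe_eq :: "('a::ab_group_add) qe \<Rightarrow> 'a qe \<Rightarrow> bool" where
  "qe_eq p q \<longleftrightarrow> (\<exists>k::nat. k > 0 \<and>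
     (\<forall>x. nsm k (nsm (snd q) (fst p x) - nsm (snd p) (fst q x)) = 0))"

definition qe_zero :: "('a::ab_group_add) qe" where
  "qe_zero = ((\<lambda>_. 0), 1)"

definition qe_mult :: "('a::ab_group_add) qe \<Rightarrow> 'a qe \<Rightarrow> 'a qe" where
  "qe_mult p q = (fst p \<circ> fst q, snd p * snd q)"

definition center_QE :: "('a::ab_group_add) qe set" where
  "center_QE = {c \<in> QE. \<forall>q \<in> QE. qe_eq (qe_mult c q) (qe_mult q c)}"

definition centrally_essential_QE :: "'a::ab_group_add itself \<Rightarrow> bool" where
  "centrally_essential_QE _ \<longleftrightarrow>
     (\<forall>a \<in> (QE :: 'a qe set). \<not> qe_eq a qe_zero \<longrightarrow>
        (\<exists>x \<in> center_QE. \<exists>y \<in> center_QE.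
           \<not> qe_eq x qe_zero \<and> \<not> qe_eq y qe_zero \<and> qe_eq (qe_mult a x) y))"

end

theory Submission
  imports Defs
begin

(* Since A is torsion-free, two formal fractions are equal in QE exactly when their
   cross multiples agree, so f |-> (f, 1) embeds End A into QE and the centre of QE
   consists of the fractions with central numerator.  A witness pair x, y for f in End A
   is then a witness pair (x, 1), (y, n) for (f, n) in QE; conversely a witness pair
   (c, n), (d, m) for (f, 1) in QE yields the witness pair m c, n d in End A, which is
   central, and nonzero because A has no torsion. *)

lemma nsm_add: "nsm n (x + y) = nsm n x + nsm n (y::'a::ab_group_add)"
  by (induct n) (simp_all add: algebra_simps)

lemma nsm_0_right [simp]: "nsm n (0::'a::ab_group_add) = 0"
  by (induct n) simp_all

lemma nsm_diff: "nsm n (x - y) = nsm n x - nsm n (y::'a::ab_group_add)"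
  by (induct n) (simp_all add: algebra_simps)

lemma End_map_zero: "f \<in> End \<Longrightarrow> f 0 = 0"
proof -
  assume "f \<in> End"
  then have "f (0 + 0) = f 0 + f 0" unfolding End_def by blast
  then show "f 0 = 0" by simp
qed

lemma End_nsm: "f \<in> End \<Longrightarrow> f (nsm n x) = nsm n (f x)"
proof (induct n)
  case 0
  then show ?case by (simp add: End_map_zero)
next
  case (Suc n)
  then show ?case by (simp add: End_def)
qed

lemma torsion_free_nsm_eq_0:
  "torsion_free TYPE('a::ab_group_add) \<Longrightarrow> n > 0 \<Longrightarrow> nsm n (x::'a) = 0 \<Longrightarrow> x = 0"
  unfolding torsion_free_def by blast

lemma torsion_free_nsm_cancel:
  assumes "torsion_free TYPE('a::ab_group_add)" "n > 0" "nsm n (x::'a) = nsm n y"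
  shows "x = y"
proof -
  from assms(3) have "nsm n (x - y) = 0" by (simp add: nsm_diff)
  then have "x - y = 0" by (rule torsion_free_nsm_eq_0[OF assms(1,2)])
  then show ?thesis by simp
qed

definition End_scale :: "nat \<Rightarrow> ('a::ab_group_add \<Rightarrow> 'a) \<Rightarrow> 'a \<Rightarrow> 'a" where
  "End_scale k f = (\<lambda>z. nsm k (f z))"

lemma End_scale_in_End: "f \<in> End \<Longrightarrow> End_scale k f \<in> End"
  by (simp add: End_def End_scale_def nsm_add)

lemma comp_End_scale: "f \<in> End \<Longrightarrow> f \<circ> End_scale k g = End_scale k (f \<circ> g)"
  by (simp add: End_scale_def End_nsm fun_eq_iff)

lemma End_scale_in_center_End:
  assumes c: "c \<in> center_End"
  shows "End_scale k c \<in> center_End"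
proof -
  have "End_scale k c \<circ> f = f \<circ> End_scale k c" if f: "f \<in> End" for f
  proof -
    have "End_scale k c \<circ> f = End_scale k (c \<circ> f)" by (simp add: End_scale_def comp_def)
    also have "c \<circ> f = f \<circ> c" using c f by (simp add: center_End_def)
    also have "End_scale k (f \<circ> c) = f \<circ> End_scale k c" by (rule comp_End_scale[OF f, symmetric])
    finally show ?thesis .
  qed
  with c show ?thesis by (simp add: center_End_def End_scale_in_End)
qed

lemma End_scale_nonzero:
  assumes "torsion_free TYPE('a::ab_group_add)" "k > 0" "(f :: 'a \<Rightarrow> 'a) \<noteq> (\<lambda>_. 0)"
  shows "End_scale k f \<noteq> (\<lambda>_. 0)"
proof
  assume "End_scale k f = (\<lambda>_. 0)"
  then have "f z = 0" for z
    using torsion_free_nsm_eq_0[OF assms(1,2)] by (metis End_scale_def)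
  with assms(3) show False by blast
qed

context
  assumes torsion_free: "torsion_free TYPE('a::ab_group_add)"
begin

lemma qe_eq_iff: "qe_eq (p::'a qe) q \<longleftrightarrow> (\<forall>x. nsm (snd q) (fst p x) = nsm (snd p) (fst q x))"
proof
  assume "qe_eq p q"
  then obtain k where "k > 0" "\<forall>x. nsm k (nsm (snd q) (fst p x) - nsm (snd p) (fst q x)) = 0"
    unfolding qe_eq_def by blast
  then have "nsm (snd q) (fst p x) - nsm (snd p) (fst q x) = 0" for x
    using torsion_free_nsm_eq_0[OF torsion_free] by blast
  then show "\<forall>x. nsm (snd q) (fst p x) = nsm (snd p) (fst q x)" by simp
next
  assume "\<forall>x. nsm (snd q) (fst p x) = nsm (snd p) (fst q x)"
  then show "qe_eq p q" unfolding qe_eq_def by (intro exI[of _ 1]) simp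
qed

lemma qe_eq_zero_iff: "qe_eq (p::'a qe) qe_zero \<longleftrightarrow> fst p = (\<lambda>_. 0)"
  unfolding qe_eq_iff qe_zero_def by (auto simp: fun_eq_iff)

lemma center_QE_iff: "(c::'a qe) \<in> center_QE \<longleftrightarrow> fst c \<in> center_End \<and> snd c > 0"
proof
  assume c: "c \<in> center_QE"
  then have pos: "snd c > 0" by (simp add: center_QE_def QE_def)
  have "fst c \<circ> f = f \<circ> fst c" if f: "f \<in> End" for f
  proof
    fix x
    have "(f, 1) \<in> QE" using f by (simp add: QE_def)
    with c have "qe_eq (qe_mult c (f, 1)) (qe_mult (f, 1) c)" by (simp add: center_QE_def)
    then have "nsm (snd c) (fst c (f x)) = nsm (snd c) (f (fst c x))"
      by (simp add: qe_eq_iff qe_mult_def)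
    then have "fst c (f x) = f (fst c x)" by (rule torsion_free_nsm_cancel[OF torsion_free pos])
    then show "(fst c \<circ> f) x = (f \<circ> fst c) x" by simp
  qed
  with c pos show "fst c \<in> center_End \<and> snd c > 0"
    unfolding center_QE_def QE_def center_End_def by blast
next
  assume c: "fst c \<in> center_End \<and> snd c > 0"
  have "qe_eq (qe_mult c q) (qe_mult q c)" if "q \<in> QE" for q
  proof -
    from c that have "fst c \<circ> fst q = fst q \<circ> fst c" by (simp add: QE_def center_End_def)
    then show ?thesis by (simp add: qe_eq_iff qe_mult_def mult.commute fun_eq_iff)
  qed
  with c show "c \<in> center_QE" by (simp add: center_QE_def QE_def center_End_def)
qed

lemma centrally_essential_QE_if_End:
  assumes "centrally_essential_End TYPE('a)"
  shows "centrally_essential_QE TYPE('a)"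
  unfolding centrally_essential_QE_def
proof (intro ballI impI)
  fix a :: "'a qe"
  assume "a \<in> QE" "\<not> qe_eq a qe_zero"
  then have a: "fst a \<in> End" "snd a > 0" "fst a \<noteq> (\<lambda>_. 0)"
    by (auto simp: QE_def qe_eq_zero_iff)
  with assms obtain x y where "x \<in> center_End" "y \<in> center_End"
    "x \<noteq> (\<lambda>_. 0)" "y \<noteq> (\<lambda>_. 0)" "fst a \<circ> x = y"
    unfolding centrally_essential_End_def by blast
  with a have "(x, 1) \<in> center_QE" "(y, snd a) \<in> center_QE"
    "\<not> qe_eq (x, 1) qe_zero" "\<not> qe_eq (y, snd a) qe_zero"
    by (simp_all add: center_QE_iff qe_eq_zero_iff)
  moreover from \<open>fst a \<circ> x = y\<close> have "qe_eq (qe_mult a (x, 1)) (y, snd a)"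
    by (auto simp: qe_eq_iff qe_mult_def)
  ultimately show "\<exists>x\<in>center_QE. \<exists>y\<in>center_QE.
      \<not> qe_eq x qe_zero \<and> \<not> qe_eq y qe_zero \<and> qe_eq (qe_mult a x) y"
    by blast
qed

lemma centrally_essential_End_if_QE:
  assumes "centrally_essential_QE TYPE('a)"
  shows "centrally_essential_End TYPE('a)"
  unfolding centrally_essential_End_def
proof (intro ballI impI)
  fix f :: "'a \<Rightarrow> 'a"
  assume f: "f \<in> End" "f \<noteq> (\<lambda>_. 0)"
  then have "(f, 1) \<in> QE" "\<not> qe_eq (f, 1) qe_zero" by (simp_all add: QE_def qe_eq_zero_iff)
  with assms obtain c n d m where
    cn: "(c, n) \<in> center_QE" "\<not> qe_eq (c, n) qe_zero" and
    dm: "(d, m) \<in> center_QE" "\<not> qe_eq (d, m) qe_zero" and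
    eq: "qe_eq (qe_mult (f, 1) (c, n)) (d, m)"
    unfolding centrally_essential_QE_def by fastforce
  from cn dm have c: "c \<in> center_End" "n > 0" "c \<noteq> (\<lambda>_. 0)"
    and d: "d \<in> center_End" "m > 0" "d \<noteq> (\<lambda>_. 0)"
    by (simp_all add: center_QE_iff qe_eq_zero_iff)
  from eq have "End_scale m (f \<circ> c) = End_scale n d"
    by (simp add: qe_eq_iff qe_mult_def End_scale_def fun_eq_iff)
  then have "f \<circ> End_scale m c = End_scale n d"
    by (simp add: comp_End_scale[OF f(1)])
  moreover have "End_scale m c \<in> center_End" "End_scale n d \<in> center_End"
    using c(1) d(1) by (simp_all add: End_scale_in_center_End)
  moreover have "End_scale m c \<noteq> (\<lambda>_. 0)" "End_scale n d \<noteq> (\<lambda>_. 0)"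
    using End_scale_nonzero[OF torsion_free d(2) c(3)] End_scale_nonzero[OF torsion_free c(2) d(3)]
    by simp_all
  ultimately show "\<exists>x\<in>center_End. \<exists>y\<in>center_End. x \<noteq> (\<lambda>_. 0) \<and> y \<noteq> (\<lambda>_. 0) \<and> f \<circ> x = y"
    by blast
qed

end

theorem proposition3p2:
  assumes "torsion_free TYPE('a::ab_group_add)"
  shows "centrally_essential_End TYPE('a) \<longleftrightarrow> centrally_essential_QE TYPE('a)"
  using centrally_essential_QE_if_End[OF assms] centrally_essential_End_if_QE[OF assms] by blast

end
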